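(* Let $A$ be an involutive alphabet and let $\Gamma$ be an involutive $A$-tree. Then $\Gamma$ is regular if and only if $\Gamma$ is context-free.
   Context: An involutive alphabet is an alphabet $A$ with an involution $a\mapsto a^{-1}$ (fixed points allowed); any alphabet $A$ yields the involutive alphabet $A^{\pm1}=A\uplus A^{-1}$. An $A$-graph is a pair $(V,E)$ with $E\subseteq V\times A\times V$; an edge $(u,a,v)$ goes from $u$ to $v$ with label $a$. It is involutive if $(u,a,v)\in E\iff(v,a^{-1},u)\in E$; the inverse of the edge $(u,a,v)$ is $(v,a^{-1},u)$. The involutive closure of an $A$-graph adds all inverse edges (passing to $A^{\pm1}$ if $A$ is not involutive). A path is reduced if it contains no edge immediately followed by its inverse. A rooted involutive graph is a tree if every vertex is the end of a unique reduced path starting at the root (this does not depend on the root). An isomorphism of $A$-graphs is a bijection on vertices preserving and reflecting labeled edges; rooted isomorphisms also map root to root; for node-labeled $A$-graphs (with node labelings $p\colon V\to P$, $q\colon W\to Q$) an isomorphism is an $A$-isomorphism $\iota$ together with a bijection $\beta\colon P\to Q$ with $\beta(p(v))=q(\iota(v))$. Context-free: For a connected rooted involutive graph, the level of a node is its distance from the root; $\Gamma_n$ is the subgraph on nodes of level $\ge n$; for $v$ at level $n$, the end-cone $\Gamma(v)$ is the connected component of $\Gamma_n$ containing $v$, and its nodes of level exactly $n$ are its frontier points. An end-isomorphism is an $A$-isomorphism between two end-cones mapping frontier points onto frontier points. A connected involutive $A$-graph with $A$ a finite involutive alphabet is context-free if it has uniformly bounded degree and there is a choice of root for which there are only finitely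 many end-isomorphism classes of end-cones. Regular: A multi-edge NFA (mNFA) is $\mathcal{A}=(Q,A,T,\alpha,\lambda,\omega)$ with finite state set $Q$, finite alphabet $A$, finite transition set $T$ and maps $\alpha,\omega\colon T\to Q$ (start, end) and $\lambda\colon T\to A$ (label); multiple transitions with the same start, label and end are allowed. A run is a sequence $\tau_1\cdots\tau_\ell$ of transitions with $\omega(\tau_i)=\alpha(\tau_{i+1})$. For a state $p$, $\Gamma(p)$ is the graph whose nodes are the runs starting in $p$ (including the empty run $\varepsilon$, which is the root), with an edge from $\varrho$ to $\varrho\tau$ labeled $\lambda(\tau)$ for each transition $\tau$, then taking the involutive closure (viewing $A$ as involutive, passing to $A^{\pm1}$ if necessary); each node $\varrho$ is labeled by the state in which $\varrho$ ends ($p$ for $\varepsilon$). A rooted node-labeled involutive $A$-tree is regular if it is isomorphic as a rooted node-labeled $A$-graph to $\Gamma(p)$ for some state $p$ of some mNFA with alphabet $A$; a rooted involutive $A$-tree is regular if it is regular for some node labeling; an involutive $A$-tree is regular if it is regular for some choice of vertex as root. *)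

theory Defs
  imports Main
begin

definition involutive_alphabet :: "'a set \<Rightarrow> ('a \<Rightarrow> 'a) \<Rightarrow> bool" where
  "involutive_alphabet A iv \<longleftrightarrow> finite A \<and> (\<forall>a\<in>A. iv a \<in> A \<and> iv (iv a) = a)"

definition A_graph :: "'a set \<Rightarrow> 'v set \<Rightarrow> ('v \<times> 'a \<times> 'v) set \<Rightarrow> bool" where
  "A_graph A V E \<longleftrightarrow> E \<subseteq> V \<times> A \<times> V"

definition inv_edge :: "('a \<Rightarrow> 'a) \<Rightarrow> ('v \<times> 'a \<times> 'v) \<Rightarrow> ('v \<times> 'a \<times> 'v)" where
  "inv_edge iv e = (case e of (u, a, v) \<Rightarrow> (v, iv a, u))"

definition involutive_graph :: "('a \<Rightarrow> 'a) \<Rightarrow> ('v \<times> 'a \<times> 'v) set \<Rightarrow> bool" where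
  "involutive_graph iv E \<longleftrightarrow> (\<forall>u a v. (u, a, v) \<in> E \<longleftrightarrow> (v, iv a, u) \<in> E)"

definition inv_closure :: "('a \<Rightarrow> 'a) \<Rightarrow> ('v \<times> 'a \<times> 'v) set \<Rightarrow> ('v \<times> 'a \<times> 'v) set" where
  "inv_closure iv E = E \<union> inv_edge iv ` E"

fun walk :: "('v \<times> 'a \<times> 'v) set \<Rightarrow> 'v \<Rightarrow> ('v \<times> 'a \<times> 'v) list \<Rightarrow> 'v \<Rightarrow> bool" where
  "walk E u [] v = (u = v)"
| "walk E u ((x, a, y) # es) v = (x = u \<and> (x, a, y) \<in> E \<and> walk E y es v)"

definition reduced_path :: "('a \<Rightarrow> 'a) \<Rightarrow> ('v \<times> 'a \<times> 'v) list \<Rightarrow> bool" where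
  "reduced_path iv es \<longleftrightarrow> (\<forall>i. Suc i < length es \<longrightarrow> es ! Suc i \<noteq> inv_edge iv (es ! i))"

definition rooted_tree :: "('a \<Rightarrow> 'a) \<Rightarrow> 'v set \<Rightarrow> ('v \<times> 'a \<times> 'v) set \<Rightarrow> 'v \<Rightarrow> bool" where
  "rooted_tree iv V E r \<longleftrightarrow> involutive_graph iv E \<and> r \<in> V \<and>
     (\<forall>v\<in>V. \<exists>!es. walk E r es v \<and> reduced_path iv es)"

text \<open>An (unrooted) involutive tree: a tree for some choice of root
  (by the paper this does not depend on the root).\<close>
definition is_tree :: "('a \<Rightarrow> 'a) \<Rightarrow> 'v set \<Rightarrow> ('v \<times> 'a \<times> 'v) set \<Rightarrow> bool" where
  "is_tree iv V E \<longleftrightarrow> (\<exists>r\<in>V. rooted_tree iv V E r)"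

definition A_iso :: "'v set \<Rightarrow> ('v \<times> 'a \<times> 'v) set \<Rightarrow> 'w set \<Rightarrow> ('w \<times> 'a \<times> 'w) set
    \<Rightarrow> ('v \<Rightarrow> 'w) \<Rightarrow> bool" where
  "A_iso V E W F \<iota> \<longleftrightarrow> bij_betw \<iota> V W \<and>
     (\<forall>u\<in>V. \<forall>v\<in>V. \<forall>a. (u, a, v) \<in> E \<longleftrightarrow> (\<iota> u, a, \<iota> v) \<in> F)"

definition rooted_labeled_iso ::
  "'v set \<Rightarrow> ('v \<times> 'a \<times> 'v) set \<Rightarrow> 'v \<Rightarrow> 'l set \<Rightarrow> ('v \<Rightarrow> 'l)
   \<Rightarrow> 'w set \<Rightarrow> ('w \<times> 'a \<times> 'w) set \<Rightarrow> 'w \<Rightarrow> 'm set \<Rightarrow> ('w \<Rightarrow> 'm) \<Rightarrow> bool" where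
  "rooted_labeled_iso V E r P p W F s Q q \<longleftrightarrow>
     (\<exists>\<iota> \<beta>. A_iso V E W F \<iota> \<and> \<iota> r = s \<and> bij_betw \<beta> P Q \<and>
        (\<forall>v\<in>V. \<beta> (p v) = q (\<iota> v)))"

definition connected_graph :: "'v set \<Rightarrow> ('v \<times> 'a \<times> 'v) set \<Rightarrow> bool" where
  "connected_graph V E \<longleftrightarrow> (\<forall>u\<in>V. \<forall>v\<in>V. \<exists>es. walk E u es v)"

definition bounded_degree :: "'v set \<Rightarrow> ('v \<times> 'a \<times> 'v) set \<Rightarrow> bool" where
  "bounded_degree V E \<longleftrightarrow> (\<exists>k::nat. \<forall>v\<in>V. finite {e\<in>E. fst e = v} \<and> card {e\<in>E. fst e = v} \<le> k)"

definition level :: "('v \<times> 'a \<times> 'v) set \<Rightarrow> 'v \<Rightarrow> 'v \<Rightarrow> nat" where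
  "level E r v = (LEAST n. \<exists>es. walk E r es v \<and> length es = n)"

definition level_ge_nodes :: "'v set \<Rightarrow> ('v \<times> 'a \<times> 'v) set \<Rightarrow> 'v \<Rightarrow> nat \<Rightarrow> 'v set" where
  "level_ge_nodes V E r n = {v\<in>V. n \<le> level E r v}"

definition induced_edges :: "('v \<times> 'a \<times> 'v) set \<Rightarrow> 'v set \<Rightarrow> ('v \<times> 'a \<times> 'v) set" where
  "induced_edges E C = {(u, a, v) \<in> E. u \<in> C \<and> v \<in> C}"

definition end_cone_nodes :: "'v set \<Rightarrow> ('v \<times> 'a \<times> 'v) set \<Rightarrow> 'v \<Rightarrow> 'v \<Rightarrow> 'v set" where
  "end_cone_nodes V E r v =
     (let Vn = level_ge_nodes V E r (level E r v)
      in {w. \<exists>es. walk (induced_edges E Vn) v es w})"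

definition end_cone_edges :: "'v set \<Rightarrow> ('v \<times> 'a \<times> 'v) set \<Rightarrow> 'v \<Rightarrow> 'v \<Rightarrow> ('v \<times> 'a \<times> 'v) set" where
  "end_cone_edges V E r v = induced_edges E (end_cone_nodes V E r v)"

definition frontier :: "'v set \<Rightarrow> ('v \<times> 'a \<times> 'v) set \<Rightarrow> 'v \<Rightarrow> 'v \<Rightarrow> 'v set" where
  "frontier V E r v = {w \<in> end_cone_nodes V E r v. level E r w = level E r v}"

definition end_isomorphic :: "'v set \<Rightarrow> ('v \<times> 'a \<times> 'v) set \<Rightarrow> 'v \<Rightarrow> 'v \<Rightarrow> 'v \<Rightarrow> bool" where
  "end_isomorphic V E r u v \<longleftrightarrow>
     (\<exists>\<iota>. A_iso (end_cone_nodes V E r u) (end_cone_edges V E r u)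
               (end_cone_nodes V E r v) (end_cone_edges V E r v) \<iota>
         \<and> \<iota> ` frontier V E r u = frontier V E r v)"

definition context_free ::
  "'a set \<Rightarrow> ('a \<Rightarrow> 'a) \<Rightarrow> 'v set \<Rightarrow> ('v \<times> 'a \<times> 'v) set \<Rightarrow> bool" where
  "context_free A iv V E \<longleftrightarrow>
     involutive_alphabet A iv \<and> A_graph A V E \<and> involutive_graph iv E \<and>
     connected_graph V E \<and> bounded_degree V E \<and>
     (\<exists>r\<in>V. finite ((\<lambda>v. {w\<in>V. end_isomorphic V E r w v}) ` V))"

definition mNFA :: "'a set \<Rightarrow> 's set \<Rightarrow> 't set \<Rightarrow> ('t \<Rightarrow> 's) \<Rightarrow> ('t \<Rightarrow> 'a) \<Rightarrow> ('t \<Rightarrow> 's) \<Rightarrow> bool" where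
  "mNFA A Q T \<alpha> lb \<omega> \<longleftrightarrow> finite Q \<and> finite A \<and> finite T \<and>
     (\<forall>\<tau>\<in>T. \<alpha> \<tau> \<in> Q \<and> \<omega> \<tau> \<in> Q \<and> lb \<tau> \<in> A)"

definition runs :: "'t set \<Rightarrow> ('t \<Rightarrow> 's) \<Rightarrow> ('t \<Rightarrow> 's) \<Rightarrow> 's \<Rightarrow> 't list set" where
  "runs T \<alpha> \<omega> p = {\<rho>. set \<rho> \<subseteq> T \<and> (\<rho> \<noteq> [] \<longrightarrow> \<alpha> (hd \<rho>) = p) \<and>
      (\<forall>i. Suc i < length \<rho> \<longrightarrow> \<omega> (\<rho> ! i) = \<alpha> (\<rho> ! Suc i))}"

definition run_edges :: "('a \<Rightarrow> 'a) \<Rightarrow> 't set \<Rightarrow> ('t \<Rightarrow> 's) \<Rightarrow> ('t \<Rightarrow> 'a) \<Rightarrow> ('t \<Rightarrow> 's) \<Rightarrow> 's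
    \<Rightarrow> ('t list \<times> 'a \<times> 't list) set" where
  "run_edges iv T \<alpha> lb \<omega> p = inv_closure iv
     {(\<rho>, lb \<tau>, \<rho> @ [\<tau>]) | \<rho> \<tau>. \<tau> \<in> T \<and> \<rho> \<in> runs T \<alpha> \<omega> p \<and> \<rho> @ [\<tau>] \<in> runs T \<alpha> \<omega> p}"

definition end_state :: "('t \<Rightarrow> 's) \<Rightarrow> 's \<Rightarrow> 't list \<Rightarrow> 's" where
  "end_state \<omega> p \<rho> = (if \<rho> = [] then p else \<omega> (last \<rho>))"

text \<open>Regular rooted node-labelled tree. States and transitions of the mNFA are
  taken to be natural numbers (w.l.o.g., they form finite sets).\<close>
definition regular_labeled ::
  "'a set \<Rightarrow> ('a \<Rightarrow> 'a) \<Rightarrow> 'v set \<Rightarrow> ('v \<times> 'a \<times> 'v) set \<Rightarrow> 'v \<Rightarrow> 'l set \<Rightarrow> ('v \<Rightarrow> 'l) \<Rightarrow> bool" where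
  "regular_labeled A iv V E r P lab \<longleftrightarrow>
     (\<exists>(Q::nat set) (T::nat set) \<alpha> lb \<omega> p. mNFA A Q T \<alpha> lb \<omega> \<and> p \<in> Q \<and>
        rooted_labeled_iso V E r P lab
          (runs T \<alpha> \<omega> p) (run_edges iv T \<alpha> lb \<omega> p) [] Q (end_state \<omega> p))"

text \<open>Regular rooted tree: regular for some node labelling (labels taken in nat,
  w.l.o.g. since the label set is in bijection with a finite state set).\<close>
definition regular_rooted ::
  "'a set \<Rightarrow> ('a \<Rightarrow> 'a) \<Rightarrow> 'v set \<Rightarrow> ('v \<times> 'a \<times> 'v) set \<Rightarrow> 'v \<Rightarrow> bool" where
  "regular_rooted A iv V E r \<longleftrightarrow>
     (\<exists>(P::nat set) (lab::'v \<Rightarrow> nat). lab ` V \<subseteq> P \<and> regular_labeled A iv V E r P lab)"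

definition regular_tree ::
  "'a set \<Rightarrow> ('a \<Rightarrow> 'a) \<Rightarrow> 'v set \<Rightarrow> ('v \<times> 'a \<times> 'v) set \<Rightarrow> bool" where
  "regular_tree A iv V E \<longleftrightarrow> (\<exists>r\<in>V. regular_rooted A iv V E r)"

end

theory Submission
  imports Defs "HOL-Library.Countable_Set"
begin

text \<open>In a tree rooted at \<open>r\<close> the end-cone of a node \<open>u\<close> is the subtree below \<open>u\<close>, whose only
  frontier point is \<open>u\<close>; so end-isomorphisms are root-preserving isomorphisms of subtrees.
  Both directions of the theorem pass through presentations of the tree by an automaton: a
  labelling of the nodes by states under which the children of each node correspond bijectively
  to the transitions leaving its state. Following runs from a node \<open>u\<close> is then an isomorphism
  from the run tree of the state of \<open>u\<close> onto the subtree of \<open>u\<close>.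

  For a regular tree, the end states of runs form a presentation with finitely many states and
  transitions: nodes in the same state have isomorphic end-cones, and degrees are bounded by the
  number of transitions. For a context-free tree, the end-isomorphism classes form a presentation
  whose run tree at the class of the root is the whole tree. Since being a rooted tree does not
  depend on the root, both notions can be evaluated at a common root.\<close>

section \<open>Walks, reduced paths and rerooting\<close>

lemma walk_append: "walk E u (xs @ ys) w \<longleftrightarrow> (\<exists>v. walk E u xs v \<and> walk E v ys w)"
  by (induction xs arbitrary: u) auto

lemma walk_snoc: "walk E u (xs @ [(x, a, y)]) w \<longleftrightarrow> walk E u xs x \<and> (x, a, y) \<in> E \<and> y = w"
  by (auto simp: walk_append)

lemma walk_end_unique: "walk E u es v \<Longrightarrow> walk E u es v' \<Longrightarrow> v = v'"
  by (induction es arbitrary: u) auto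

lemma walk_in_V: "A_graph A V E \<Longrightarrow> u \<in> V \<Longrightarrow> walk E u es v \<Longrightarrow> v \<in> V"
  by (induction es arbitrary: u) (auto simp: A_graph_def)

lemma inv_edge_eq [simp]: "inv_edge iv (u, a, v) = (v, iv a, u)"
  by (simp add: inv_edge_def)

lemma walk_rev:
  "involutive_graph iv E \<Longrightarrow> walk E u es v \<Longrightarrow> walk E v (rev (map (inv_edge iv) es)) u"
  by (induction es arbitrary: u) (auto simp: walk_append involutive_graph_def)

lemma reduced_Nil [simp]: "reduced_path iv []"
  by (simp add: reduced_path_def)

lemma reduced_single [simp]: "reduced_path iv [e]"
  by (simp add: reduced_path_def)

lemma reduced_Cons:
  "reduced_path iv (e # es) \<longleftrightarrow> reduced_path iv es \<and> (es \<noteq> [] \<longrightarrow> hd es \<noteq> inv_edge iv e)"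
  by (cases es) (auto simp: reduced_path_def All_less_Suc2)

lemma reduced_append:
  "reduced_path iv (xs @ ys) \<longleftrightarrow> reduced_path iv xs \<and> reduced_path iv ys \<and>
     (xs \<noteq> [] \<and> ys \<noteq> [] \<longrightarrow> hd ys \<noteq> inv_edge iv (last xs))"
  by (induction xs) (auto simp: reduced_Cons)

definition reduce_cons ::
    "('a \<Rightarrow> 'a) \<Rightarrow> 'v \<times> 'a \<times> 'v \<Rightarrow> ('v \<times> 'a \<times> 'v) list \<Rightarrow> ('v \<times> 'a \<times> 'v) list" where
  "reduce_cons iv e es = (if es \<noteq> [] \<and> hd es = inv_edge iv e then tl es else e # es)"

lemma walk_reduce_cons:
  "(u, a, v) \<in> E \<Longrightarrow> walk E v es w \<Longrightarrow> walk E u (reduce_cons iv (u, a, v) es) w"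
  by (cases es) (auto simp: reduce_cons_def)

lemma reduced_reduce_cons: "reduced_path iv es \<Longrightarrow> reduced_path iv (reduce_cons iv e es)"
  by (cases es) (auto simp: reduce_cons_def reduced_Cons)

lemma reduce_cons_inv_edge:
  assumes "iv (iv a) = a" and "reduced_path iv es"
  shows "reduce_cons iv (inv_edge iv (u, a, v)) (reduce_cons iv (u, a, v) es) = es"
  using assms by (cases es) (auto simp: reduce_cons_def reduced_Cons)

text \<open>Prepending an edge (with cancellation) and prepending its inverse are mutually inverse
  bijections between the reduced paths starting at its two ends.\<close>

lemma rooted_tree_reroot_edge:
  assumes alph: "involutive_alphabet A iv" and gr: "A_graph A V E"
    and tree: "rooted_tree iv V E r" and e: "(r, a, s) \<in> E"
  shows "rooted_tree iv V E s"
proof -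
  have ivv: "iv (iv a) = a" and sV: "s \<in> V"
    using e gr alph by (auto simp: A_graph_def involutive_alphabet_def)
  have inv: "involutive_graph iv E" and paths: "\<forall>v\<in>V. \<exists>!es. walk E r es v \<and> reduced_path iv es"
    using tree by (auto simp: rooted_tree_def)
  have e': "(s, iv a, r) \<in> E" using e inv by (simp add: involutive_graph_def)
  have "\<exists>!es. walk E s es v \<and> reduced_path iv es" if "v \<in> V" for v
  proof -
    obtain p where p: "walk E r p v" "reduced_path iv p" using paths \<open>v \<in> V\<close> by blast
    show ?thesis
    proof
      show "walk E s (reduce_cons iv (s, iv a, r) p) v \<and>
          reduced_path iv (reduce_cons iv (s, iv a, r) p)"
        using p e' by (simp add: walk_reduce_cons reduced_reduce_cons)
    next
      fix es assume es: "walk E s es v \<and> reduced_path iv es"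
      then have "walk E r (reduce_cons iv (r, a, s) es) v \<and>
          reduced_path iv (reduce_cons iv (r, a, s) es)"
        using e by (simp add: walk_reduce_cons reduced_reduce_cons)
      then have "reduce_cons iv (r, a, s) es = p"
        using paths p \<open>v \<in> V\<close> by blast
      then show "es = reduce_cons iv (s, iv a, r) p"
        using reduce_cons_inv_edge[of iv a es r s] ivv es by simp
    qed
  qed
  then show ?thesis using inv sV by (simp add: rooted_tree_def)
qed

lemma rooted_tree_reroot:
  assumes alph: "involutive_alphabet A iv" and gr: "A_graph A V E"
    and tree: "rooted_tree iv V E r" and sV: "s \<in> V"
  shows "rooted_tree iv V E s"
proof -
  obtain es where "walk E r es s" using tree sV by (auto simp: rooted_tree_def)
  then show ?thesis
    using tree
  proof (induction es arbitrary: r)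
    case (Cons e es)
    then show ?case
      by (cases e) (auto intro: rooted_tree_reroot_edge[OF alph gr])
  qed simp
qed

lemma rooted_tree_connected:
  assumes "rooted_tree iv V E r"
  shows "connected_graph V E"
  unfolding connected_graph_def
proof (intro ballI)
  fix u v assume "u \<in> V" "v \<in> V"
  then obtain es1 es2 where "walk E r es1 u" "walk E r es2 v"
    using assms unfolding rooted_tree_def by blast
  then have "walk E u (rev (map (inv_edge iv) es1) @ es2) v"
    using assms walk_rev by (fastforce simp: rooted_tree_def walk_append)
  then show "\<exists>es. walk E u es v" ..
qed

section \<open>Isomorphisms and end-isomorphism classes\<close>

lemma A_iso_inv: "A_iso V E W F \<iota> \<Longrightarrow> A_iso W F V E (inv_into V \<iota>)"
  unfolding A_iso_def
proof (elim conjE, intro conjI ballI allI)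
  assume bij: "bij_betw \<iota> V W" and edges: "\<forall>u\<in>V. \<forall>v\<in>V. \<forall>a. (u, a, v) \<in> E \<longleftrightarrow> (\<iota> u, a, \<iota> v) \<in> F"
  show "bij_betw (inv_into V \<iota>) W V" using bij by (rule bij_betw_inv_into)
  fix u v a assume "u \<in> W" "v \<in> W"
  then show "(u, a, v) \<in> F \<longleftrightarrow> (inv_into V \<iota> u, a, inv_into V \<iota> v) \<in> E"
    using bij edges by (simp add: bij_betw_def inv_into_into f_inv_into_f)
qed

lemma A_iso_comp: "A_iso V E W F \<iota> \<Longrightarrow> A_iso W F X G \<kappa> \<Longrightarrow> A_iso V E X G (\<kappa> \<circ> \<iota>)"
  unfolding A_iso_def by (auto intro: bij_betw_trans dest: bij_betwE)

lemma A_iso_induced_edges: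
  "A_iso S (induced_edges E S) S' (induced_edges E S') \<phi> \<longleftrightarrow>
     bij_betw \<phi> S S' \<and> (\<forall>x\<in>S. \<forall>y\<in>S. \<forall>a. (x, a, y) \<in> E \<longleftrightarrow> (\<phi> x, a, \<phi> y) \<in> E)"
proof -
  have "(\<phi> x, a, \<phi> y) \<in> induced_edges E S' \<longleftrightarrow> (\<phi> x, a, \<phi> y) \<in> E"
    if "bij_betw \<phi> S S'" "x \<in> S" "y \<in> S" for x y a
    using that bij_betwE by (fastforce simp: induced_edges_def)
  moreover have "(x, a, y) \<in> induced_edges E S \<longleftrightarrow> (x, a, y) \<in> E" if "x \<in> S" "y \<in> S" for x y a
    using that by (simp add: induced_edges_def)
  ultimately show ?thesis
    unfolding A_iso_def by auto
qed

lemma end_isomorphic_refl: "end_isomorphic V E r u u"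
  unfolding end_isomorphic_def A_iso_def by (rule exI[of _ id]) simp

lemma end_isomorphic_sym: "end_isomorphic V E r u v \<Longrightarrow> end_isomorphic V E r v u"
  unfolding end_isomorphic_def
proof (elim exE conjE)
  fix \<iota> assume iso: "A_iso (end_cone_nodes V E r u) (end_cone_edges V E r u)
      (end_cone_nodes V E r v) (end_cone_edges V E r v) \<iota>" and fr: "\<iota> ` frontier V E r u = frontier V E r v"
  have "frontier V E r u \<subseteq> end_cone_nodes V E r u"
    by (auto simp: frontier_def)
  then have "inv_into (end_cone_nodes V E r u) \<iota> ` frontier V E r v = frontier V E r u"
    using inv_into_image_cancel[of \<iota> "end_cone_nodes V E r u" "frontier V E r u"] iso fr
    by (simp add: A_iso_def bij_betw_def)
  then show "\<exists>\<kappa>. A_iso (end_cone_nodes V E r v) (end_cone_edges V E r v)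
      (end_cone_nodes V E r u) (end_cone_edges V E r u) \<kappa> \<and> \<kappa> ` frontier V E r v = frontier V E r u"
    using A_iso_inv[OF iso] by blast
qed

lemma end_isomorphic_trans:
  "end_isomorphic V E r u v \<Longrightarrow> end_isomorphic V E r v w \<Longrightarrow> end_isomorphic V E r u w"
  unfolding end_isomorphic_def
proof (elim exE conjE)
  fix \<iota> \<kappa>
  assume uv: "A_iso (end_cone_nodes V E r u) (end_cone_edges V E r u)
      (end_cone_nodes V E r v) (end_cone_edges V E r v) \<iota>" "\<iota> ` frontier V E r u = frontier V E r v"
    and vw: "A_iso (end_cone_nodes V E r v) (end_cone_edges V E r v)
      (end_cone_nodes V E r w) (end_cone_edges V E r w) \<kappa>" "\<kappa> ` frontier V E r v = frontier V E r w"
  have "(\<kappa> \<circ> \<iota>) ` frontier V E r u = frontier V E r w"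
    by (simp only: image_comp[symmetric] uv(2) vw(2))
  with A_iso_comp[OF uv(1) vw(1)] show "\<exists>\<phi>. A_iso (end_cone_nodes V E r u) (end_cone_edges V E r u)
      (end_cone_nodes V E r w) (end_cone_edges V E r w) \<phi> \<and> \<phi> ` frontier V E r u = frontier V E r w"
    by blast
qed

definition end_class :: "'v set \<Rightarrow> ('v \<times> 'a \<times> 'v) set \<Rightarrow> 'v \<Rightarrow> 'v \<Rightarrow> 'v set" where
  "end_class V E r v = {w \<in> V. end_isomorphic V E r w v}"

lemma end_class_eq_iff:
  assumes "u \<in> V" "v \<in> V"
  shows "end_class V E r u = end_class V E r v \<longleftrightarrow> end_isomorphic V E r u v"
proof
  assume "end_class V E r u = end_class V E r v"
  moreover have "u \<in> end_class V E r u"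
    using assms end_isomorphic_refl by (simp add: end_class_def)
  ultimately show "end_isomorphic V E r u v" by (simp add: end_class_def)
next
  assume uv: "end_isomorphic V E r u v"
  then show "end_class V E r u = end_class V E r v"
    unfolding end_class_def
    using end_isomorphic_trans[OF _ uv] end_isomorphic_trans[OF _ end_isomorphic_sym[OF uv]]
    by blast
qed

section \<open>Subtrees of a rooted involutive tree\<close>

locale rooted_involutive_tree =
  fixes A :: "'a set" and iv :: "'a \<Rightarrow> 'a" and V :: "'v set" and E :: "('v \<times> 'a \<times> 'v) set"
    and r :: 'v
  assumes alphabet: "involutive_alphabet A iv"
    and A_graph: "A_graph A V E"
    and tree: "rooted_tree iv V E r"
begin

lemma root_in_V: "r \<in> V"
  using tree by (simp add: rooted_tree_def)

lemma edge_in_graph: "(x, a, y) \<in> E \<Longrightarrow> x \<in> V \<and> a \<in> A \<and> y \<in> V"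
  using A_graph by (auto simp: A_graph_def)

lemma iv_iv: "a \<in> A \<Longrightarrow> iv (iv a) = a"
  using alphabet by (simp add: involutive_alphabet_def)

lemma inverse_edge_mem: "(x, a, y) \<in> E \<Longrightarrow> (y, iv a, x) \<in> E"
  using tree by (simp add: rooted_tree_def involutive_graph_def)

definition root_path :: "'v \<Rightarrow> ('v \<times> 'a \<times> 'v) list" where
  "root_path v = (THE es. walk E r es v \<and> reduced_path iv es)"

lemma root_path:
  assumes "v \<in> V"
  shows "walk E r (root_path v) v \<and> reduced_path iv (root_path v)"
proof -
  have "\<exists>!es. walk E r es v \<and> reduced_path iv es"
    using tree assms by (simp add: rooted_tree_def)
  then show ?thesis unfolding root_path_def by (rule theI')
qed

lemma root_path_unique:
  assumes "walk E r es v" "reduced_path iv es"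
  shows "root_path v = es"
proof -
  have "v \<in> V" using walk_in_V[OF A_graph root_in_V assms(1)] .
  then have "\<exists>!es. walk E r es v \<and> reduced_path iv es"
    using tree by (simp add: rooted_tree_def)
  then show ?thesis using root_path[OF \<open>v \<in> V\<close>] assms by blast
qed

lemma root_path_root: "root_path r = []"
  by (rule root_path_unique) auto

lemma root_path_inj:
  assumes "v \<in> V" "w \<in> V" "root_path v = root_path w"
  shows "v = w"
proof -
  have "walk E r (root_path v) v" "walk E r (root_path v) w"
    using root_path[of v] root_path[of w] assms by auto
  then show ?thesis by (rule walk_end_unique)
qed

lemma root_path_prefix:
  assumes "v \<in> V" "root_path v = xs @ ys"
  shows "\<exists>x\<in>V. root_path x = xs \<and> walk E x ys v"
proof -
  obtain x where x: "walk E r xs x" "walk E x ys v"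
    using root_path[OF assms(1)] assms(2) by (auto simp: walk_append)
  have "reduced_path iv xs"
    using root_path[OF assms(1)] assms(2) by (simp add: reduced_append)
  then show ?thesis
    using x root_path_unique walk_in_V[OF A_graph root_in_V x(1)] by blast
qed

definition depth :: "'v \<Rightarrow> nat" where
  "depth v = length (root_path v)"

definition is_child :: "'v \<Rightarrow> 'a \<Rightarrow> 'v \<Rightarrow> bool" where
  "is_child x a w \<longleftrightarrow> w \<in> V \<and> root_path w = root_path x @ [(x, a, w)]"

lemma is_child_edge:
  assumes "is_child x a w"
  shows "x \<in> V \<and> (x, a, w) \<in> E"
proof -
  have "walk E r (root_path x @ [(x, a, w)]) w"
    using assms root_path[of w] by (simp add: is_child_def)
  then show ?thesis
    using walk_in_V[OF A_graph root_in_V] by (auto simp: walk_snoc)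
qed

lemma depth_is_child: "is_child x a w \<Longrightarrow> depth w = Suc (depth x)"
  by (simp add: is_child_def depth_def)

lemma is_child_unique: "is_child x a w \<Longrightarrow> is_child y b w \<Longrightarrow> x = y \<and> a = b"
  by (simp add: is_child_def)

lemma edge_is_child:
  assumes e: "(x, a, w) \<in> E"
  shows "is_child x a w \<or> is_child w (iv a) x"
proof (cases "reduced_path iv (root_path x @ [(x, a, w)])")
  case True
  have "walk E r (root_path x @ [(x, a, w)]) w"
    using root_path edge_in_graph[OF e] e by (simp add: walk_snoc)
  then show ?thesis
    using True root_path_unique edge_in_graph[OF e] by (simp add: is_child_def)
next
  case False
  have xV: "x \<in> V" using edge_in_graph[OF e] by simp
  then have "root_path x \<noteq> []" and cancel: "(x, a, w) = inv_edge iv (last (root_path x))"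
    using False root_path[OF xV] by (auto simp: reduced_append)
  then obtain xs e' where split: "root_path x = xs @ [e']" by (cases "root_path x" rule: rev_cases) auto
  then obtain z where "z \<in> V" "root_path z = xs" "walk E z [e'] x"
    using root_path_prefix[OF xV] by blast
  then obtain b where e': "e' = (z, b, x)" "(z, b, x) \<in> E" "root_path z = xs"
    by (cases e') auto
  then have "(x, a, w) = (x, iv b, z)" using cancel split by simp
  then have "w = z" "iv a = b" using iv_iv edge_in_graph[OF e'(2)] by auto
  then show ?thesis
    using split xV e' by (simp add: is_child_def)
qed

lemma depth_edge: "(x, a, y) \<in> E \<Longrightarrow> depth y = Suc (depth x) \<or> depth x = Suc (depth y)"
  using edge_is_child[of x a y] by (auto dest: depth_is_child)

lemma is_child_if_depth_less: "(x, a, w) \<in> E \<Longrightarrow> depth x < depth w \<Longrightarrow> is_child x a w"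
  using edge_is_child[of x a w] depth_is_child[of w "iv a" x] by auto

lemma depth_walk: "walk E u es w \<Longrightarrow> depth w \<le> depth u + length es"
proof (induction es arbitrary: u)
  case (Cons e es)
  obtain x b y where e: "e = (x, b, y)" by (cases e)
  then have "(u, b, y) \<in> E" "walk E y es w" using Cons.prems by auto
  then have "depth w \<le> depth y + length es" "depth y \<le> Suc (depth u)"
    using Cons.IH depth_edge[of u b y] by auto
  then show ?case by simp
qed simp

lemma level_eq_depth:
  assumes "v \<in> V"
  shows "level E r v = depth v"
  unfolding level_def
proof (rule Least_equality)
  show "\<exists>es. walk E r es v \<and> length es = depth v"
    using root_path[OF assms] by (auto simp: depth_def)
next
  fix n assume "\<exists>es. walk E r es v \<and> length es = n"
  then show "depth v \<le> n"
    using depth_walk[of r _ v] root_path_root by (auto simp: depth_def)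
qed

definition subtree :: "'v \<Rightarrow> 'v set" where
  "subtree u = {w \<in> V. \<exists>ds. root_path w = root_path u @ ds}"

lemma subtree_self: "u \<in> V \<Longrightarrow> u \<in> subtree u"
  by (auto simp: subtree_def)

lemma subtree_subset: "subtree u \<subseteq> V"
  by (auto simp: subtree_def)

lemma subtree_root: "subtree r = V"
  by (auto simp: subtree_def root_path_root)

lemma induced_edges_V: "induced_edges E V = E"
  using A_graph by (auto simp: A_graph_def induced_edges_def)

lemma subtree_trans: "w \<in> subtree x \<Longrightarrow> x \<in> subtree u \<Longrightarrow> w \<in> subtree u"
  by (auto simp: subtree_def)

lemma depth_subtree: "w \<in> subtree u \<Longrightarrow> depth u \<le> depth w"
  by (auto simp: subtree_def depth_def)

lemma subtree_depth_eq: "u \<in> V \<Longrightarrow> w \<in> subtree u \<Longrightarrow> depth w = depth u \<Longrightarrow> w = u"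
  by (auto simp: subtree_def depth_def intro: root_path_inj)

lemma is_child_subtree: "is_child x a w \<Longrightarrow> x \<in> subtree u \<Longrightarrow> w \<in> subtree u"
  by (auto simp: subtree_def is_child_def)

lemma subtree_parent:
  assumes "u \<in> V" "w \<in> subtree u" "w \<noteq> u"
  shows "\<exists>x a. x \<in> subtree u \<and> is_child x a w"
proof -
  obtain ds where wV: "w \<in> V" and ds: "root_path w = root_path u @ ds"
    using assms(2) by (auto simp: subtree_def)
  have "ds \<noteq> []" using ds assms root_path_inj wV by auto
  then obtain ds' e where "ds = ds' @ [e]" by (cases ds rule: rev_cases) auto
  then obtain x where x: "x \<in> V" "root_path x = root_path u @ ds'" "walk E x [e] w"
    using root_path_prefix[OF wV, of "root_path u @ ds'" "[e]"] ds by auto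
  then obtain a where "e = (x, a, w)" by (cases e) auto
  then have "is_child x a w"
    using x wV ds \<open>ds = ds' @ [e]\<close> by (simp add: is_child_def)
  moreover have "x \<in> subtree u" using x by (auto simp: subtree_def)
  ultimately show ?thesis by blast
qed

lemma subtree_induct [consumes 2, case_names root child]:
  assumes "u \<in> V" "w \<in> subtree u"
    and "P u"
    and "\<And>x a y. x \<in> subtree u \<Longrightarrow> is_child x a y \<Longrightarrow> P x \<Longrightarrow> P y"
  shows "P w"
  using assms(2)
proof (induction "depth w" arbitrary: w rule: less_induct)
  case less
  show ?case
  proof (cases "w = u")
    case False
    then obtain x a where x: "x \<in> subtree u" "is_child x a w"
      using subtree_parent assms(1) less.prems by blast
    then have "P x" using less.hyps[of x] depth_is_child[OF x(2)] by simp
    then show ?thesis using assms(4) x by blast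
  qed (use assms(3) in simp)
qed

lemma walk_below_in_subtree:
  assumes uV: "u \<in> V" and "walk (induced_edges E {v \<in> V. depth u \<le> depth v}) u es w"
  shows "w \<in> subtree u"
  using assms(2)
proof (induction es arbitrary: w rule: rev_induct)
  case (snoc e es)
  obtain x a y where "e = (x, a, y)" by (cases e)
  then have x: "x \<in> subtree u" and xw: "(x, a, w) \<in> E" "depth u \<le> depth w"
    using snoc by (auto simp: walk_snoc induced_edges_def)
  from edge_is_child[OF xw(1)] show ?case
  proof
    assume "is_child x a w"
    then show ?thesis using x is_child_subtree by blast
  next
    assume child: "is_child w (iv a) x"
    then have "x \<noteq> u" using xw(2) depth_is_child by fastforce
    then show ?thesis
      using subtree_parent[OF uV x] child is_child_unique by blast
  qed
qed (simp add: subtree_self uV)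

lemma subtree_reachable_below:
  assumes "u \<in> V" and "w \<in> subtree u"
  shows "\<exists>es. walk (induced_edges E {v \<in> V. depth u \<le> depth v}) u es w"
  using assms
proof (induction rule: subtree_induct)
  case root
  have "walk (induced_edges E {v \<in> V. depth u \<le> depth v}) u [] u" by simp
  then show ?case ..
next
  case (child x a y)
  then obtain es where "walk (induced_edges E {v \<in> V. depth u \<le> depth v}) u es x" by blast
  moreover have "(x, a, y) \<in> induced_edges E {v \<in> V. depth u \<le> depth v}"
    using child is_child_edge[OF child(2)] edge_in_graph depth_subtree depth_is_child
    by (fastforce simp: induced_edges_def)
  ultimately have "walk (induced_edges E {v \<in> V. depth u \<le> depth v}) u (es @ [(x, a, y)]) y"
    by (simp add: walk_snoc)
  then show ?case ..
qed

lemma end_cone_nodes_eq_subtree: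
  assumes "u \<in> V"
  shows "end_cone_nodes V E r u = subtree u"
proof -
  have "level_ge_nodes V E r (level E r u) = {v \<in> V. depth u \<le> depth v}"
    using assms level_eq_depth by (auto simp: level_ge_nodes_def)
  then show ?thesis
    unfolding end_cone_nodes_def Let_def
    using walk_below_in_subtree[OF assms] subtree_reachable_below[OF assms] by auto
qed

lemma frontier_eq:
  assumes "u \<in> V"
  shows "frontier V E r u = {u}"
proof -
  have "w = u" if "w \<in> subtree u" "level E r w = level E r u" for w
    using that assms subtree_depth_eq subtree_subset level_eq_depth by (metis subsetD)
  then show ?thesis
    using subtree_self[OF assms] unfolding frontier_def end_cone_nodes_eq_subtree[OF assms] by auto
qed

definition subtree_iso :: "'v \<Rightarrow> 'v \<Rightarrow> ('v \<Rightarrow> 'v) \<Rightarrow> bool" where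
  "subtree_iso u v \<phi> \<longleftrightarrow>
     A_iso (subtree u) (induced_edges E (subtree u)) (subtree v) (induced_edges E (subtree v)) \<phi> \<and> \<phi> u = v"

lemma end_isomorphic_iff_subtree_iso:
  "u \<in> V \<Longrightarrow> v \<in> V \<Longrightarrow> end_isomorphic V E r u v \<longleftrightarrow> (\<exists>\<phi>. subtree_iso u v \<phi>)"
  by (simp add: end_isomorphic_def subtree_iso_def end_cone_edges_def end_cone_nodes_eq_subtree
      frontier_eq)

lemma subtree_iso_bij: "subtree_iso u v \<phi> \<Longrightarrow> bij_betw \<phi> (subtree u) (subtree v)"
  by (simp add: subtree_iso_def A_iso_induced_edges)

lemma subtree_iso_edge:
  "subtree_iso u v \<phi> \<Longrightarrow> x \<in> subtree u \<Longrightarrow> y \<in> subtree u \<Longrightarrow> (x, a, y) \<in> E \<longleftrightarrow> (\<phi> x, a, \<phi> y) \<in> E"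
  by (simp add: subtree_iso_def A_iso_induced_edges)

lemma subtree_iso_inv:
  assumes "u \<in> V" "subtree_iso u v \<phi>"
  shows "subtree_iso v u (inv_into (subtree u) \<phi>)"
proof -
  have "inv_into (subtree u) \<phi> v = u"
    using assms subtree_self[OF assms(1)] subtree_iso_bij[OF assms(2)]
    by (auto simp: subtree_iso_def bij_betw_def)
  then show ?thesis
    using assms(2) by (simp add: subtree_iso_def A_iso_inv)
qed

text \<open>This is how subtree isomorphisms, and isomorphisms onto run trees, are seen to preserve
  depth.\<close>

lemma subtree_depth_unique:
  assumes uV: "u \<in> V" and "g u = 0"
    and step: "\<And>x a y. x \<in> subtree u \<Longrightarrow> y \<in> subtree u \<Longrightarrow> (x, a, y) \<in> E \<Longrightarrow>
      g y = Suc (g x) \<or> g x = Suc (g y)"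
    and below_unique: "\<And>x y z a b. x \<in> subtree u \<Longrightarrow> y \<in> subtree u \<Longrightarrow> z \<in> subtree u \<Longrightarrow>
      (y, a, x) \<in> E \<Longrightarrow> (z, b, x) \<in> E \<Longrightarrow> g y < g x \<Longrightarrow> g z < g x \<Longrightarrow> y = z"
    and "w \<in> subtree u"
  shows "g w = depth w - depth u"
  using assms(5)
proof (induction "depth w" arbitrary: w rule: less_induct)
  case less
  show ?case
  proof (cases "w = u")
    case False
    then obtain x a where x: "x \<in> subtree u" "is_child x a w"
      using subtree_parent uV less.prems by blast
    have dw: "depth w = Suc (depth x)" and "depth u \<le> depth x"
      using depth_is_child[OF x(2)] depth_subtree[OF x(1)] by auto
    have gx: "g x = depth x - depth u"
      using less.hyps[OF _ x(1)] dw by simp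
    have e: "(x, a, w) \<in> E" using is_child_edge[OF x(2)] by simp
    from step[OF x(1) less.prems e] show ?thesis
    proof
      assume gw: "g x = Suc (g w)"
      then have "x \<noteq> u" using \<open>g u = 0\<close> by auto
      then obtain z b where z: "z \<in> subtree u" "is_child z b x"
        using subtree_parent uV x(1) by blast
      have "depth x = Suc (depth z)" "depth u \<le> depth z"
        using depth_is_child[OF z(2)] depth_subtree[OF z(1)] by auto
      moreover have "g z = depth z - depth u"
        using less.hyps[OF _ z(1)] dw calculation by simp
      moreover have zx: "(z, b, x) \<in> E" using is_child_edge[OF z(2)] by simp
      ultimately have "w = z"
        using below_unique[OF x(1) less.prems z(1) inverse_edge_mem[OF e] zx] gw gx by simp
      then show ?thesis using dw \<open>depth x = Suc (depth z)\<close> by simp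
    qed (use gx dw \<open>depth u \<le> depth x\<close> in simp)
  qed (simp add: \<open>g u = 0\<close>)
qed

lemma subtree_iso_depth:
  assumes iso: "subtree_iso u v \<phi>" and uV: "u \<in> V" and w: "w \<in> subtree u"
  shows "depth (\<phi> w) - depth v = depth w - depth u"
proof -
  have maps: "\<phi> x \<in> subtree v" if "x \<in> subtree u" for x
    using subtree_iso_bij[OF iso] that by (auto dest: bij_betwE)
  have inj: "inj_on \<phi> (subtree u)"
    using subtree_iso_bij[OF iso] by (simp add: bij_betw_def)
  show ?thesis
  proof (rule subtree_depth_unique[OF uV _ _ _ w])
    show "depth (\<phi> u) - depth v = 0" using iso by (simp add: subtree_iso_def)
  next
    fix x a y assume "x \<in> subtree u" "y \<in> subtree u" "(x, a, y) \<in> E"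
    then show "depth (\<phi> y) - depth v = Suc (depth (\<phi> x) - depth v) \<or>
        depth (\<phi> x) - depth v = Suc (depth (\<phi> y) - depth v)"
      using depth_edge[of "\<phi> x" a "\<phi> y"] subtree_iso_edge[OF iso] maps depth_subtree
      by (metis Suc_diff_le)
  next
    fix x y z a b
    assume xyz: "x \<in> subtree u" "y \<in> subtree u" "z \<in> subtree u"
      and "(y, a, x) \<in> E" "(z, b, x) \<in> E"
      and "depth (\<phi> y) - depth v < depth (\<phi> x) - depth v"
        "depth (\<phi> z) - depth v < depth (\<phi> x) - depth v"
    then have "is_child (\<phi> y) a (\<phi> x)" "is_child (\<phi> z) b (\<phi> x)"
      using subtree_iso_edge[OF iso] is_child_if_depth_less by auto
    then have "\<phi> y = \<phi> z" using is_child_unique by blast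
    then show "y = z" using inj xyz by (auto dest: inj_onD)
  qed
qed

lemma subtree_iso_is_child:
  assumes iso: "subtree_iso u v \<phi>" and uV: "u \<in> V"
    and x: "x \<in> subtree u" and child: "is_child x a y"
  shows "is_child (\<phi> x) a (\<phi> y)"
proof -
  have y: "y \<in> subtree u" using is_child_subtree[OF child x] .
  have "(\<phi> x, a, \<phi> y) \<in> E"
    using subtree_iso_edge[OF iso x y] is_child_edge[OF child] by simp
  moreover have "depth v \<le> depth (\<phi> x)" "depth v \<le> depth (\<phi> y)"
    using subtree_iso_bij[OF iso] x y depth_subtree by (auto dest: bij_betwE)
  moreover have "depth u \<le> depth x"
    using depth_subtree[OF x] .
  ultimately show ?thesis
    using subtree_iso_depth[OF iso uV x] subtree_iso_depth[OF iso uV y] depth_is_child[OF child]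
    by (intro is_child_if_depth_less) auto
qed

lemma subtree_iso_image_subtree:
  assumes iso: "subtree_iso u v \<phi>" and uV: "u \<in> V" and x: "x \<in> subtree u"
  shows "\<phi> ` subtree x \<subseteq> subtree (\<phi> x)"
proof
  have xV: "x \<in> V" using x subtree_subset by blast
  fix y assume "y \<in> \<phi> ` subtree x"
  then obtain w where w: "w \<in> subtree x" "y = \<phi> w" by blast
  have "\<phi> w \<in> subtree (\<phi> x)"
    using xV w(1)
  proof (induction rule: subtree_induct)
    case root
    have "\<phi> x \<in> V"
      using subtree_iso_bij[OF iso] x subtree_subset by (auto dest: bij_betwE)
    then show ?case by (rule subtree_self)
  next
    case (child z a w)
    then show ?case
      using subtree_iso_is_child[OF iso uV] subtree_trans[OF _ x] is_child_subtree by blast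
  qed
  then show "y \<in> subtree (\<phi> x)" using w by simp
qed

lemma subtree_iso_restrict:
  assumes iso: "subtree_iso u v \<phi>" and uV: "u \<in> V" and x: "x \<in> subtree u"
  shows "subtree_iso x (\<phi> x) \<phi>"
proof -
  define \<psi> where "\<psi> = inv_into (subtree u) \<phi>"
  have bij: "bij_betw \<phi> (subtree u) (subtree v)" using subtree_iso_bij[OF iso] .
  have iso': "subtree_iso v u \<psi>" using subtree_iso_inv[OF uV iso] by (simp add: \<psi>_def)
  have vV: "v \<in> V"
    using bij subtree_self[OF uV] subtree_subset iso by (auto simp: subtree_iso_def dest: bij_betwE)
  have \<phi>x: "\<phi> x \<in> subtree v" and \<psi>\<phi>x: "\<psi> (\<phi> x) = x"
    using bij x by (auto simp: \<psi>_def bij_betw_def)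
  have sub: "subtree x \<subseteq> subtree u" using x subtree_trans by blast
  have "subtree (\<phi> x) \<subseteq> \<phi> ` subtree x"
  proof
    fix y assume y: "y \<in> subtree (\<phi> x)"
    then have "\<psi> y \<in> subtree x"
      using subtree_iso_image_subtree[OF iso' vV \<phi>x] \<psi>\<phi>x by auto
    moreover have "\<phi> (\<psi> y) = y"
      using bij y subtree_trans[OF y \<phi>x] by (simp add: \<psi>_def bij_betw_def f_inv_into_f)
    ultimately show "y \<in> \<phi> ` subtree x" by (metis imageI)
  qed
  then have "bij_betw \<phi> (subtree x) (subtree (\<phi> x))"
    using subtree_iso_image_subtree[OF iso uV x] bij sub
    by (auto simp: bij_betw_def intro: inj_on_subset)
  then show ?thesis
    using subtree_iso_edge[OF iso] sub by (auto simp: subtree_iso_def A_iso_induced_edges)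
qed

definition children :: "'v \<Rightarrow> 'v set" where
  "children x = {w. \<exists>a. is_child x a w}"

lemma bounded_degree_if_children_bounded:
  assumes "\<And>x. x \<in> V \<Longrightarrow> finite (children x) \<and> card (children x) \<le> k"
  shows "bounded_degree V E"
  unfolding bounded_degree_def
proof (intro exI ballI)
  fix x assume xV: "x \<in> V"
  define out where "out = (\<lambda>w. last (root_path w)) ` children x \<union> {inv_edge iv (last (root_path x))}"
  have "{e \<in> E. fst e = x} \<subseteq> out"
  proof
    fix e assume "e \<in> {e \<in> E. fst e = x}"
    then obtain a w where e: "e = (x, a, w)" "(x, a, w) \<in> E" by (cases e) auto
    from edge_is_child[OF e(2)] show "e \<in> out"
    proof
      assume child: "is_child x a w"
      then have "e = last (root_path w)" by (simp add: is_child_def e)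
      moreover have "w \<in> children x" using child by (auto simp: children_def)
      ultimately show ?thesis by (simp add: out_def)
    next
      assume "is_child w (iv a) x"
      then show ?thesis
        using iv_iv edge_in_graph[OF e(2)] by (simp add: out_def is_child_def e)
    qed
  qed
  moreover have "finite out" "card out \<le> k + 1"
    using assms[OF xV] card_image_le[of "children x" "\<lambda>w. last (root_path w)"]
      card_insert_le_m1[of "Suc k" "(\<lambda>w. last (root_path w)) ` children x"]
    by (auto simp: out_def)
  ultimately show "finite {e \<in> E. fst e = x} \<and> card {e \<in> E. fst e = x} \<le> k + 1"
    using finite_subset card_mono by (metis (no_types, lifting) order.trans)
qed

end

section \<open>Runs of a multi-edge NFA\<close>

lemma runs_Nil [simp]: "[] \<in> runs T \<alpha> \<omega> p"
  by (simp add: runs_def)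

lemma runs_Cons: "\<tau> # \<sigma> \<in> runs T \<alpha> \<omega> p \<longleftrightarrow> \<tau> \<in> T \<and> \<alpha> \<tau> = p \<and> \<sigma> \<in> runs T \<alpha> \<omega> (\<omega> \<tau>)"
  by (cases \<sigma>) (auto simp: runs_def All_less_Suc2)

lemma end_state_Nil [simp]: "end_state \<omega> p [] = p"
  by (simp add: end_state_def)

lemma end_state_Cons: "end_state \<omega> p (\<tau> # \<sigma>) = end_state \<omega> (\<omega> \<tau>) \<sigma>"
  by (simp add: end_state_def)

lemma end_state_snoc [simp]: "end_state \<omega> p (\<rho> @ [\<tau>]) = \<omega> \<tau>"
  by (simp add: end_state_def)

lemma runs_append:
  "\<rho> @ \<sigma> \<in> runs T \<alpha> \<omega> p \<longleftrightarrow> \<rho> \<in> runs T \<alpha> \<omega> p \<and> \<sigma> \<in> runs T \<alpha> \<omega> (end_state \<omega> p \<rho>)"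
  by (induction \<rho> arbitrary: p) (auto simp: runs_Cons end_state_Cons)

lemma runs_snoc:
  "\<rho> @ [\<tau>] \<in> runs T \<alpha> \<omega> p \<longleftrightarrow> \<rho> \<in> runs T \<alpha> \<omega> p \<and> \<tau> \<in> T \<and> \<alpha> \<tau> = end_state \<omega> p \<rho>"
  by (simp add: runs_append runs_Cons)

lemma end_state_in_states:
  "mNFA A Q T \<alpha> lb \<omega> \<Longrightarrow> p \<in> Q \<Longrightarrow> \<rho> \<in> runs T \<alpha> \<omega> p \<Longrightarrow> end_state \<omega> p \<rho> \<in> Q"
  by (cases \<rho> rule: rev_cases) (auto simp: mNFA_def runs_snoc)

lemma run_edges_iff:
  "(\<rho>1, a, \<rho>2) \<in> run_edges iv T \<alpha> lb \<omega> p \<longleftrightarrow>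
     (\<exists>\<tau>. \<rho>2 = \<rho>1 @ [\<tau>] \<and> \<rho>2 \<in> runs T \<alpha> \<omega> p \<and> a = lb \<tau>) \<or>
     (\<exists>\<tau>. \<rho>1 = \<rho>2 @ [\<tau>] \<and> \<rho>1 \<in> runs T \<alpha> \<omega> p \<and> a = iv (lb \<tau>))"
  by (auto simp: run_edges_def inv_closure_def runs_snoc image_iff)

section \<open>Trees presented by an automaton\<close>

locale tree_presentation = rooted_involutive_tree A iv V E r
  for A :: "'a set" and iv :: "'a \<Rightarrow> 'a" and V :: "'v set" and E :: "('v \<times> 'a \<times> 'v) set"
    and r :: 'v +
  fixes T :: "'t set" and \<alpha> :: "'t \<Rightarrow> 's" and lb :: "'t \<Rightarrow> 'a" and \<omega> :: "'t \<Rightarrow> 's"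
    and st :: "'v \<Rightarrow> 's" and child_at :: "'v \<Rightarrow> 't \<Rightarrow> 'v"
  assumes is_child_child_at: "x \<in> V \<Longrightarrow> \<tau> \<in> T \<Longrightarrow> \<alpha> \<tau> = st x \<Longrightarrow> is_child x (lb \<tau>) (child_at x \<tau>)"
    and state_child_at: "x \<in> V \<Longrightarrow> \<tau> \<in> T \<Longrightarrow> \<alpha> \<tau> = st x \<Longrightarrow> st (child_at x \<tau>) = \<omega> \<tau>"
    and inj_on_child_at: "x \<in> V \<Longrightarrow> inj_on (child_at x) {\<tau> \<in> T. \<alpha> \<tau> = st x}"
    and child_at_surj: "is_child x a w \<Longrightarrow> \<exists>\<tau>\<in>T. \<alpha> \<tau> = st x \<and> child_at x \<tau> = w"
begin

definition run_node :: "'v \<Rightarrow> 't list \<Rightarrow> 'v" where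
  "run_node u \<rho> = foldl child_at u \<rho>"

lemma run_node_Nil [simp]: "run_node u [] = u"
  by (simp add: run_node_def)

lemma run_node_snoc [simp]: "run_node u (\<rho> @ [\<tau>]) = child_at (run_node u \<rho>) \<tau>"
  by (simp add: run_node_def)

lemma run_node_in_subtree:
  assumes uV: "u \<in> V" and "\<rho> \<in> runs T \<alpha> \<omega> (st u)"
  shows "run_node u \<rho> \<in> subtree u \<and> st (run_node u \<rho>) = end_state \<omega> (st u) \<rho>"
  using assms(2)
proof (induction \<rho> rule: rev_induct)
  case (snoc \<tau> \<rho>)
  then have \<rho>: "\<rho> \<in> runs T \<alpha> \<omega> (st u)" "\<tau> \<in> T" "\<alpha> \<tau> = st (run_node u \<rho>)"
    and x: "run_node u \<rho> \<in> subtree u"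
    by (auto simp: runs_snoc)
  have "run_node u \<rho> \<in> V" using x subtree_subset by blast
  then show ?case
    using is_child_child_at[OF _ \<rho>(2,3)] state_child_at[OF _ \<rho>(2,3)] is_child_subtree x by auto
qed (simp add: subtree_self uV)

lemma is_child_run_node:
  assumes "u \<in> V" "\<rho> @ [\<tau>] \<in> runs T \<alpha> \<omega> (st u)"
  shows "is_child (run_node u \<rho>) (lb \<tau>) (run_node u (\<rho> @ [\<tau>]))"
proof -
  have \<rho>: "\<rho> \<in> runs T \<alpha> \<omega> (st u)" "\<tau> \<in> T" "\<alpha> \<tau> = end_state \<omega> (st u) \<rho>"
    using assms(2) by (auto simp: runs_snoc)
  then have "run_node u \<rho> \<in> V" "\<alpha> \<tau> = st (run_node u \<rho>)"
    using run_node_in_subtree[OF assms(1) \<rho>(1)] subtree_subset by auto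
  then show ?thesis
    using is_child_child_at[OF _ \<rho>(2)] by simp
qed

lemma depth_run_node:
  "u \<in> V \<Longrightarrow> \<rho> \<in> runs T \<alpha> \<omega> (st u) \<Longrightarrow> depth (run_node u \<rho>) = depth u + length \<rho>"
proof (induction \<rho> rule: rev_induct)
  case (snoc \<tau> \<rho>)
  then show ?case
    using depth_is_child[OF is_child_run_node[OF snoc.prems]] by (simp add: runs_snoc)
qed simp

lemma inj_on_run_node:
  assumes uV: "u \<in> V"
  shows "inj_on (run_node u) (runs T \<alpha> \<omega> (st u))"
proof (rule inj_onI)
  fix \<rho>1 \<rho>2
  assume "\<rho>1 \<in> runs T \<alpha> \<omega> (st u)" "\<rho>2 \<in> runs T \<alpha> \<omega> (st u)" "run_node u \<rho>1 = run_node u \<rho>2"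
  then show "\<rho>1 = \<rho>2"
  proof (induction \<rho>1 arbitrary: \<rho>2 rule: rev_induct)
    case Nil
    then show ?case using depth_run_node[OF uV] by fastforce
  next
    case (snoc \<tau>1 \<sigma>1)
    then have "length \<rho>2 = Suc (length \<sigma>1)"
      using depth_run_node[OF uV snoc.prems(1)] depth_run_node[OF uV snoc.prems(2)] by simp
    then obtain \<sigma>2 \<tau>2 where \<rho>2: "\<rho>2 = \<sigma>2 @ [\<tau>2]" by (cases \<rho>2 rule: rev_cases) auto
    have runs: "\<sigma>1 \<in> runs T \<alpha> \<omega> (st u)" "\<tau>1 \<in> T" "\<alpha> \<tau>1 = end_state \<omega> (st u) \<sigma>1"
      "\<sigma>2 \<in> runs T \<alpha> \<omega> (st u)" "\<tau>2 \<in> T" "\<alpha> \<tau>2 = end_state \<omega> (st u) \<sigma>2"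
      using snoc.prems \<rho>2 by (auto simp: runs_snoc)
    have "run_node u \<sigma>1 = run_node u \<sigma>2"
      using is_child_run_node[OF uV snoc.prems(1)] is_child_run_node[OF uV snoc.prems(2)[unfolded \<rho>2]]
        snoc.prems(3) \<rho>2 is_child_unique by metis
    then have \<sigma>: "\<sigma>1 = \<sigma>2" using snoc.IH runs by blast
    define x where "x = run_node u \<sigma>1"
    have "x \<in> V" "st x = end_state \<omega> (st u) \<sigma>1"
      using run_node_in_subtree[OF uV runs(1)] subtree_subset by (auto simp: x_def)
    moreover have "child_at x \<tau>1 = child_at x \<tau>2"
      using snoc.prems(3) \<rho>2 \<sigma> by (simp add: x_def)
    ultimately have "\<tau>1 = \<tau>2"
      using inj_on_child_at[of x] runs \<sigma> by (simp add: inj_on_def)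
    then show ?case using \<rho>2 \<sigma> by simp
  qed
qed

lemma run_node_image:
  assumes uV: "u \<in> V"
  shows "run_node u ` runs T \<alpha> \<omega> (st u) = subtree u"
proof
  show "run_node u ` runs T \<alpha> \<omega> (st u) \<subseteq> subtree u"
    using run_node_in_subtree[OF uV] by auto
next
  show "subtree u \<subseteq> run_node u ` runs T \<alpha> \<omega> (st u)"
  proof
    fix w assume "w \<in> subtree u"
    with uV show "w \<in> run_node u ` runs T \<alpha> \<omega> (st u)"
    proof (induction rule: subtree_induct)
      case root
      show ?case using runs_Nil run_node_Nil by (metis imageI)
    next
      case (child x a y)
      then obtain \<rho> where \<rho>: "\<rho> \<in> runs T \<alpha> \<omega> (st u)" "x = run_node u \<rho>" by blast
      obtain \<tau> where "\<tau> \<in> T" "\<alpha> \<tau> = st x" "child_at x \<tau> = y"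
        using child_at_surj[OF child.hyps(2)] by blast
      then have "\<rho> @ [\<tau>] \<in> runs T \<alpha> \<omega> (st u)" "run_node u (\<rho> @ [\<tau>]) = y"
        using \<rho> run_node_in_subtree[OF uV] by (auto simp: runs_snoc)
      then show ?case by (metis imageI)
    qed
  qed
qed

lemma run_node_is_child_imp_snoc:
  assumes uV: "u \<in> V" and runs: "\<rho>1 \<in> runs T \<alpha> \<omega> (st u)" "\<rho>2 \<in> runs T \<alpha> \<omega> (st u)"
    and child: "is_child (run_node u \<rho>1) a (run_node u \<rho>2)"
  shows "\<exists>\<tau>. \<rho>2 = \<rho>1 @ [\<tau>] \<and> a = lb \<tau>"
proof -
  have "length \<rho>2 = Suc (length \<rho>1)"
    using depth_is_child[OF child] depth_run_node[OF uV] runs by simp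
  then obtain \<sigma> \<tau> where \<rho>2: "\<rho>2 = \<sigma> @ [\<tau>]" by (cases \<rho>2 rule: rev_cases) auto
  then have "run_node u \<sigma> = run_node u \<rho>1" "a = lb \<tau>"
    using is_child_run_node[OF uV] runs(2) child is_child_unique by blast+
  moreover have "\<sigma> \<in> runs T \<alpha> \<omega> (st u)" using runs(2) \<rho>2 by (simp add: runs_snoc)
  ultimately show ?thesis
    using inj_on_run_node[OF uV] runs(1) \<rho>2 by (auto dest: inj_onD)
qed

lemma run_edges_iff_run_node_edge:
  assumes uV: "u \<in> V" and runs: "\<rho>1 \<in> runs T \<alpha> \<omega> (st u)" "\<rho>2 \<in> runs T \<alpha> \<omega> (st u)"
  shows "(\<rho>1, a, \<rho>2) \<in> run_edges iv T \<alpha> lb \<omega> (st u) \<longleftrightarrow> (run_node u \<rho>1, a, run_node u \<rho>2) \<in> E"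
proof
  assume "(\<rho>1, a, \<rho>2) \<in> run_edges iv T \<alpha> lb \<omega> (st u)"
  then show "(run_node u \<rho>1, a, run_node u \<rho>2) \<in> E"
    unfolding run_edges_iff
    using is_child_run_node[OF uV] is_child_edge inverse_edge_mem by blast
next
  assume e: "(run_node u \<rho>1, a, run_node u \<rho>2) \<in> E"
  have "iv (iv a) = a" using iv_iv edge_in_graph[OF e] by blast
  then show "(\<rho>1, a, \<rho>2) \<in> run_edges iv T \<alpha> lb \<omega> (st u)"
    using edge_is_child[OF e] run_node_is_child_imp_snoc[OF uV] runs
    unfolding run_edges_iff by metis
qed

theorem run_node_iso:
  assumes "u \<in> V"
  shows "A_iso (runs T \<alpha> \<omega> (st u)) (run_edges iv T \<alpha> lb \<omega> (st u))
      (subtree u) (induced_edges E (subtree u)) (run_node u)"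
  using assms inj_on_run_node run_node_image run_node_in_subtree run_edges_iff_run_node_edge
  by (auto simp: A_iso_def bij_betw_def induced_edges_def)

lemma end_isomorphic_if_same_state:
  assumes uV: "u \<in> V" and vV: "v \<in> V" and st: "st u = st v"
  shows "end_isomorphic V E r u v"
proof -
  define \<phi> where "\<phi> = run_node v \<circ> inv_into (runs T \<alpha> \<omega> (st u)) (run_node u)"
  have "A_iso (subtree u) (induced_edges E (subtree u)) (subtree v) (induced_edges E (subtree v)) \<phi>"
    unfolding \<phi>_def using A_iso_comp[OF A_iso_inv[OF run_node_iso[OF uV]]] run_node_iso[OF vV] st
    by simp
  moreover have "\<phi> u = v"
    using inv_into_f_f[OF inj_on_run_node[OF uV] runs_Nil] by (simp add: \<phi>_def)
  ultimately show ?thesis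
    using uV vV end_isomorphic_iff_subtree_iso by (auto simp: subtree_iso_def)
qed

lemma finite_end_classes_if_finite_states:
  assumes "finite (st ` V)"
  shows "finite (end_class V E r ` V)"
proof -
  have "end_class V E r v = end_class V E r (inv_into V st (st v))" if "v \<in> V" for v
    using that end_class_eq_iff end_isomorphic_if_same_state inv_into_into f_inv_into_f
    by (metis imageI)
  then have "end_class V E r ` V \<subseteq> (\<lambda>q. end_class V E r (inv_into V st q)) ` st ` V"
    by auto
  then show ?thesis using assms finite_surj by blast
qed

lemma bounded_degree_if_finite_transitions:
  assumes "finite T"
  shows "bounded_degree V E"
proof (rule bounded_degree_if_children_bounded)
  fix x assume "x \<in> V"
  have "children x \<subseteq> child_at x ` T"
    using child_at_surj by (fastforce simp: children_def)
  then show "finite (children x) \<and> card (children x) \<le> card T"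
    using assms finite_surj surj_card_le by blast
qed

lemma tree_presentation_reindex:
  assumes "bij_betw h T' T"
  shows "tree_presentation A iv V E r T' (\<alpha> \<circ> h) (lb \<circ> h) (\<omega> \<circ> h) st (\<lambda>x. child_at x \<circ> h)"
proof unfold_locales
  fix x \<tau>' assume "x \<in> V" "\<tau>' \<in> T'" "(\<alpha> \<circ> h) \<tau>' = st x"
  moreover have "h \<tau>' \<in> T" using assms \<open>\<tau>' \<in> T'\<close> by (auto dest: bij_betwE)
  ultimately show "is_child x ((lb \<circ> h) \<tau>') ((child_at x \<circ> h) \<tau>')"
    and "st ((child_at x \<circ> h) \<tau>') = (\<omega> \<circ> h) \<tau>'"
    using is_child_child_at state_child_at by auto
next
  fix x assume "x \<in> V"
  have "h ` {\<tau>' \<in> T'. (\<alpha> \<circ> h) \<tau>' = st x} \<subseteq> {\<tau> \<in> T. \<alpha> \<tau> = st x}"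
    using assms by (auto dest: bij_betwE)
  then show "inj_on (child_at x \<circ> h) {\<tau>' \<in> T'. (\<alpha> \<circ> h) \<tau>' = st x}"
    using assms inj_on_child_at[OF \<open>x \<in> V\<close>]
    by (auto simp: bij_betw_def intro: comp_inj_on inj_on_subset inj_on_subset[OF _ subset_UNIV])
next
  fix x a w assume "is_child x a w"
  then obtain \<tau> where "\<tau> \<in> T" "\<alpha> \<tau> = st x" "child_at x \<tau> = w"
    using child_at_surj by blast
  moreover obtain \<tau>' where "\<tau>' \<in> T'" "h \<tau>' = \<tau>"
    using assms \<open>\<tau> \<in> T\<close> by (auto simp: bij_betw_def)
  ultimately show "\<exists>\<tau>'\<in>T'. (\<alpha> \<circ> h) \<tau>' = st x \<and> (child_at x \<circ> h) \<tau>' = w"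
    by auto
qed

lemma rooted_labeled_iso_run_tree:
  "rooted_labeled_iso V E r Q st (runs T \<alpha> \<omega> (st r)) (run_edges iv T \<alpha> lb \<omega> (st r))
     [] Q (end_state \<omega> (st r))"
proof -
  define R where "R = runs T \<alpha> \<omega> (st r)"
  define \<iota> where "\<iota> = inv_into R (run_node r)"
  have "A_iso V E R (run_edges iv T \<alpha> lb \<omega> (st r)) \<iota>"
    using A_iso_inv[OF run_node_iso[OF root_in_V]]
    by (simp add: \<iota>_def R_def subtree_root induced_edges_V)
  moreover have "\<iota> r = []"
    using inv_into_f_f[OF inj_on_run_node[OF root_in_V] runs_Nil] by (simp add: \<iota>_def R_def)
  moreover have "st v = end_state \<omega> (st r) (\<iota> v)" if "v \<in> V" for v
  proof -
    have "v \<in> run_node r ` R"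
      using that run_node_image[OF root_in_V] subtree_root by (simp add: R_def)
    then have "\<iota> v \<in> R" "run_node r (\<iota> v) = v"
      by (auto simp: \<iota>_def inv_into_into f_inv_into_f)
    then show ?thesis
      using run_node_in_subtree[OF root_in_V] by (fastforce simp: R_def)
  qed
  ultimately show ?thesis
    unfolding rooted_labeled_iso_def R_def by (intro exI[of _ \<iota>] exI[of _ id]) simp
qed

end

lemma regular_rooted_if_nat_tree_presentation:
  fixes st :: "'v \<Rightarrow> nat" and T :: "nat set"
  assumes P: "tree_presentation A iv V E r T \<alpha> lb \<omega> st child_at"
    and "finite T" "finite (st ` V)" "lb ` T \<subseteq> A"
  shows "regular_rooted A iv V E r"
proof -
  interpret tree_presentation A iv V E r T \<alpha> lb \<omega> st child_at by (rule P)
  define Q where "Q = st ` V \<union> \<alpha> ` T \<union> \<omega> ` T"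
  have "mNFA A Q T \<alpha> lb \<omega>"
    using assms alphabet by (auto simp: mNFA_def Q_def involutive_alphabet_def)
  moreover have "st r \<in> Q" using root_in_V by (simp add: Q_def)
  ultimately have "regular_labeled A iv V E r Q st"
    using rooted_labeled_iso_run_tree unfolding regular_labeled_def by blast
  then show ?thesis
    unfolding regular_rooted_def by (intro exI[of _ Q] exI[of _ st] conjI) (auto simp: Q_def)
qed

lemma regular_rooted_if_tree_presentation:
  fixes st :: "'v \<Rightarrow> nat"
  assumes P: "tree_presentation A iv V E r T \<alpha> lb \<omega> st child_at"
    and "finite T" "finite (st ` V)" "lb ` T \<subseteq> A"
  shows "regular_rooted A iv V E r"
proof -
  obtain h where h: "bij_betw h {0..<card T} T"
    using ex_bij_betw_nat_finite[OF \<open>finite T\<close>] by blast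
  have "(lb \<circ> h) ` {0..<card T} \<subseteq> A"
    using h \<open>lb ` T \<subseteq> A\<close> by (auto simp: bij_betw_def)
  then show ?thesis
    using regular_rooted_if_nat_tree_presentation[OF tree_presentation.tree_presentation_reindex[OF P h]]
      \<open>finite (st ` V)\<close> by simp
qed

section \<open>Regular trees are context-free\<close>

locale run_tree_iso = rooted_involutive_tree A iv V E r
  for A :: "'a set" and iv :: "'a \<Rightarrow> 'a" and V :: "'v set" and E :: "('v \<times> 'a \<times> 'v) set"
    and r :: 'v +
  fixes T :: "'t set" and \<alpha> :: "'t \<Rightarrow> 's" and lb :: "'t \<Rightarrow> 'a" and \<omega> :: "'t \<Rightarrow> 's" and p :: 's
    and \<iota> :: "'v \<Rightarrow> 't list"
  assumes iso: "A_iso V E (runs T \<alpha> \<omega> p) (run_edges iv T \<alpha> lb \<omega> p) \<iota>"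
    and root_run: "\<iota> r = []"
begin

lemma edge_iff_run_edge:
  "x \<in> V \<Longrightarrow> y \<in> V \<Longrightarrow> (x, a, y) \<in> E \<longleftrightarrow> (\<iota> x, a, \<iota> y) \<in> run_edges iv T \<alpha> lb \<omega> p"
  using iso by (simp add: A_iso_def)

lemma bij_betw_runs: "bij_betw \<iota> V (runs T \<alpha> \<omega> p)"
  using iso by (simp add: A_iso_def)

lemma length_run_eq_depth:
  assumes "v \<in> V"
  shows "length (\<iota> v) = depth v"
proof -
  have "length (\<iota> v) = depth v - depth r"
  proof (rule subtree_depth_unique[OF root_in_V])
    show "length (\<iota> r) = 0" using root_run by simp
  next
    fix x a y assume "x \<in> subtree r" "y \<in> subtree r" "(x, a, y) \<in> E"
    then show "length (\<iota> y) = Suc (length (\<iota> x)) \<or> length (\<iota> x) = Suc (length (\<iota> y))"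
      using edge_iff_run_edge subtree_root unfolding run_edges_iff by auto
  next
    fix x y z a b
    assume "x \<in> subtree r" "y \<in> subtree r" "z \<in> subtree r" "(y, a, x) \<in> E" "(z, b, x) \<in> E"
      "length (\<iota> y) < length (\<iota> x)" "length (\<iota> z) < length (\<iota> x)"
    then have "\<iota> y = \<iota> z" "y \<in> V" "z \<in> V"
      using edge_iff_run_edge subtree_root unfolding run_edges_iff by auto
    then show "y = z" using inj_on_eq_iff[OF bij_betw_imp_inj_on[OF bij_betw_runs]] by simp
  qed (use assms subtree_root in simp)
  then show ?thesis by (simp add: depth_def root_path_root)
qed

lemma run_extension:
  assumes "x \<in> V" "\<tau> \<in> T" "\<alpha> \<tau> = end_state \<omega> p (\<iota> x)"
  shows "inv_into V \<iota> (\<iota> x @ [\<tau>]) \<in> V \<and> \<iota> (inv_into V \<iota> (\<iota> x @ [\<tau>])) = \<iota> x @ [\<tau>]"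
proof -
  have "\<iota> x @ [\<tau>] \<in> runs T \<alpha> \<omega> p"
    using assms bij_betw_runs by (auto simp: runs_snoc dest: bij_betwE)
  then show ?thesis
    using bij_betw_runs by (auto simp: bij_betw_def inv_into_into f_inv_into_f)
qed

lemma is_child_run_extension:
  assumes "x \<in> V" "\<tau> \<in> T" "\<alpha> \<tau> = end_state \<omega> p (\<iota> x)"
  shows "is_child x (lb \<tau>) (inv_into V \<iota> (\<iota> x @ [\<tau>]))"
proof -
  define w where "w = inv_into V \<iota> (\<iota> x @ [\<tau>])"
  have w: "w \<in> V" "\<iota> w = \<iota> x @ [\<tau>]" using run_extension[OF assms] by (simp_all add: w_def)
  moreover have "\<iota> w \<in> runs T \<alpha> \<omega> p" using bij_betw_runs w(1) by (auto dest: bij_betwE)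
  ultimately have "(x, lb \<tau>, w) \<in> E"
    using edge_iff_run_edge[OF assms(1) w(1)] by (auto simp: run_edges_iff)
  moreover have "depth x < depth w"
    using length_run_eq_depth[OF assms(1)] length_run_eq_depth[OF w(1)] w(2) by simp
  ultimately show ?thesis
    unfolding w_def by (rule is_child_if_depth_less)
qed

lemma is_child_imp_run_extension:
  assumes child: "is_child x a w"
  shows "\<exists>\<tau>\<in>T. \<alpha> \<tau> = end_state \<omega> p (\<iota> x) \<and> inv_into V \<iota> (\<iota> x @ [\<tau>]) = w"
proof -
  have V: "x \<in> V" "w \<in> V" and "(\<iota> x, a, \<iota> w) \<in> run_edges iv T \<alpha> lb \<omega> p"
    using is_child_edge[OF child] edge_in_graph edge_iff_run_edge by blast+
  moreover have "length (\<iota> w) = Suc (length (\<iota> x))"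
    using length_run_eq_depth depth_is_child[OF child] V by simp
  ultimately obtain \<tau> where \<tau>: "\<iota> w = \<iota> x @ [\<tau>]" "\<iota> w \<in> runs T \<alpha> \<omega> p"
    unfolding run_edges_iff by auto
  then have "\<tau> \<in> T" "\<alpha> \<tau> = end_state \<omega> p (\<iota> x)" by (simp_all add: runs_snoc)
  moreover have "inv_into V \<iota> (\<iota> x @ [\<tau>]) = w"
    using bij_betw_runs V(2) \<tau>(1) by (metis bij_betw_imp_inj_on inv_into_f_f)
  ultimately show ?thesis by blast
qed

theorem tree_presentation_by_end_states:
  "tree_presentation A iv V E r T \<alpha> lb \<omega> (\<lambda>v. end_state \<omega> p (\<iota> v)) (\<lambda>x \<tau>. inv_into V \<iota> (\<iota> x @ [\<tau>]))"
proof unfold_locales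
  fix x \<tau> assume x: "x \<in> V" "\<tau> \<in> T" "\<alpha> \<tau> = end_state \<omega> p (\<iota> x)"
  show "is_child x (lb \<tau>) (inv_into V \<iota> (\<iota> x @ [\<tau>]))"
    using is_child_run_extension[OF x] .
  show "end_state \<omega> p (\<iota> (inv_into V \<iota> (\<iota> x @ [\<tau>]))) = \<omega> \<tau>"
    using run_extension[OF x] by simp
next
  fix x assume "x \<in> V"
  show "inj_on (\<lambda>\<tau>. inv_into V \<iota> (\<iota> x @ [\<tau>])) {\<tau> \<in> T. \<alpha> \<tau> = end_state \<omega> p (\<iota> x)}"
  proof (rule inj_onI)
    fix \<tau>1 \<tau>2
    assume \<tau>: "\<tau>1 \<in> {\<tau> \<in> T. \<alpha> \<tau> = end_state \<omega> p (\<iota> x)}" "\<tau>2 \<in> {\<tau> \<in> T. \<alpha> \<tau> = end_state \<omega> p (\<iota> x)}"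
      and eq: "inv_into V \<iota> (\<iota> x @ [\<tau>1]) = inv_into V \<iota> (\<iota> x @ [\<tau>2])"
    have "\<iota> x @ [\<tau>1] = \<iota> (inv_into V \<iota> (\<iota> x @ [\<tau>1]))"
      using run_extension[OF \<open>x \<in> V\<close>] \<tau>(1) by simp
    also have "\<dots> = \<iota> x @ [\<tau>2]"
      unfolding eq using run_extension[OF \<open>x \<in> V\<close>] \<tau>(2) by simp
    finally show "\<tau>1 = \<tau>2" by simp
  qed
next
  fix x a w assume "is_child x a w"
  then show "\<exists>\<tau>\<in>T. \<alpha> \<tau> = end_state \<omega> p (\<iota> x) \<and> inv_into V \<iota> (\<iota> x @ [\<tau>]) = w"
    by (rule is_child_imp_run_extension)
qed

end

lemma (in rooted_involutive_tree) context_free_if_regular_rooted: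
  assumes "regular_rooted A iv V E r"
  shows "bounded_degree V E \<and> finite (end_class V E r ` V)"
proof -
  obtain P :: "nat set" and lab where "regular_labeled A iv V E r P lab"
    using assms unfolding regular_rooted_def by (elim exE conjE) (erule that)
  then obtain Q T :: "nat set" and \<alpha> lb \<omega> p where m: "mNFA A Q T \<alpha> lb \<omega>" and p: "p \<in> Q"
    and "rooted_labeled_iso V E r P lab (runs T \<alpha> \<omega> p) (run_edges iv T \<alpha> lb \<omega> p) [] Q (end_state \<omega> p)"
    unfolding regular_labeled_def by (elim exE conjE) (erule that)
  then obtain \<iota> where iso: "A_iso V E (runs T \<alpha> \<omega> p) (run_edges iv T \<alpha> lb \<omega> p) \<iota>" and root: "\<iota> r = []"
    unfolding rooted_labeled_iso_def by (elim exE conjE) (erule that)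
  interpret run_tree_iso A iv V E r T \<alpha> lb \<omega> p \<iota>
    by unfold_locales (rule iso, rule root)
  interpret tree_presentation A iv V E r T \<alpha> lb \<omega> "\<lambda>v. end_state \<omega> p (\<iota> v)"
      "\<lambda>x \<tau>. inv_into V \<iota> (\<iota> x @ [\<tau>])"
    by (rule tree_presentation_by_end_states)
  have "(\<lambda>v. end_state \<omega> p (\<iota> v)) ` V \<subseteq> Q"
    using end_state_in_states[OF m p] bij_betw_runs by (auto dest: bij_betwE)
  then show ?thesis
    using m bounded_degree_if_finite_transitions finite_end_classes_if_finite_states finite_subset
    by (auto simp: mNFA_def)
qed

section \<open>Context-free trees are regular\<close>

text \<open>States are the end-isomorphism classes. The transitions leaving a class are the child edges
  of a fixed representative of it, and at any other node \<open>x\<close> of the class they are transported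
  along a subtree isomorphism from the representative to \<open>x\<close>.\<close>

locale context_free_rooted_tree = rooted_involutive_tree A iv V E r
  for A :: "'a set" and iv :: "'a \<Rightarrow> 'a" and V :: "'v set" and E :: "('v \<times> 'a \<times> 'v) set"
    and r :: 'v +
  assumes degree_bounded: "bounded_degree V E"
    and finitely_many_end_classes: "finite (end_class V E r ` V)"
begin

definition class_index :: "'v \<Rightarrow> nat" where
  "class_index v = to_nat_on (end_class V E r ` V) (end_class V E r v)"

definition representative :: "nat \<Rightarrow> 'v" where
  "representative q = (SOME v. v \<in> V \<and> class_index v = q)"

definition iso_from_representative :: "'v \<Rightarrow> 'v \<Rightarrow> 'v" where
  "iso_from_representative x = (SOME \<phi>. subtree_iso (representative (class_index x)) x \<phi>)"

definition representative_child_edges :: "('v \<times> 'a \<times> 'v) set" where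
  "representative_child_edges = {(x, a, w). x \<in> representative ` class_index ` V \<and> is_child x a w}"

lemma class_index_eq_iff:
  "u \<in> V \<Longrightarrow> v \<in> V \<Longrightarrow> class_index u = class_index v \<longleftrightarrow> end_isomorphic V E r u v"
  using finitely_many_end_classes by (simp add: class_index_def countable_finite end_class_eq_iff)

lemma finite_class_index: "finite (class_index ` V)"
proof -
  have "class_index ` V = to_nat_on (end_class V E r ` V) ` end_class V E r ` V"
    by (auto simp: class_index_def)
  then show ?thesis using finitely_many_end_classes by simp
qed

lemma representative_in_class:
  assumes "v \<in> V"
  shows "representative (class_index v) \<in> V \<and>
    class_index (representative (class_index v)) = class_index v"
  unfolding representative_def by (rule someI[of _ v]) (simp add: assms)

lemma representative_idem:
  "x \<in> representative ` class_index ` V \<Longrightarrow> x \<in> V \<and> representative (class_index x) = x"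
  using representative_in_class by auto

lemma subtree_iso_from_representative:
  assumes "x \<in> V"
  shows "subtree_iso (representative (class_index x)) x (iso_from_representative x)"
proof -
  have "end_isomorphic V E r (representative (class_index x)) x"
    using representative_in_class[OF assms] class_index_eq_iff assms by blast
  then have "\<exists>\<phi>. subtree_iso (representative (class_index x)) x \<phi>"
    using end_isomorphic_iff_subtree_iso representative_in_class[OF assms] assms by blast
  then show ?thesis
    unfolding iso_from_representative_def by (rule someI_ex)
qed

lemma finite_representative_child_edges: "finite representative_child_edges"
proof -
  have "representative_child_edges \<subseteq> (\<Union>x \<in> representative ` class_index ` V. {e \<in> E. fst e = x})"
    using is_child_edge by (auto simp: representative_child_edges_def)
  moreover have "finite (\<Union>x \<in> representative ` class_index ` V. {e \<in> E. fst e = x})"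
  proof (rule finite_UN_I)
    show "finite (representative ` class_index ` V)"
      using finite_class_index by simp
    fix x assume "x \<in> representative ` class_index ` V"
    then show "finite {e \<in> E. fst e = x}"
      using degree_bounded representative_idem by (auto simp: bounded_degree_def)
  qed
  ultimately show ?thesis by (rule finite_subset)
qed

lemma representative_child_edges_source:
  assumes "(x, a, w) \<in> representative_child_edges" "class_index x = class_index y"
  shows "x = representative (class_index y) \<and> x \<in> V \<and> is_child x a w"
proof -
  have rep: "x \<in> representative ` class_index ` V" and "is_child x a w"
    using assms(1) by (simp_all add: representative_child_edges_def)
  have "x \<in> V" "representative (class_index x) = x"
    using representative_idem[OF rep] by simp_all
  with \<open>is_child x a w\<close> show ?thesis using assms(2) by simp
qed

lemma transported_child:
  assumes y: "y \<in> V" and e: "(x, a, w) \<in> representative_child_edges" "class_index x = class_index y"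
  shows "is_child y a (iso_from_representative y w) \<and>
    class_index (iso_from_representative y w) = class_index w"
proof -
  define \<phi> where "\<phi> = iso_from_representative y"
  have x: "x = representative (class_index y)" "x \<in> V" and child: "is_child x a w"
    using representative_child_edges_source[OF e] by auto
  have iso: "subtree_iso x y \<phi>"
    using subtree_iso_from_representative[OF y] by (simp add: \<phi>_def x(1))
  have w: "w \<in> subtree x" using is_child_subtree[OF child subtree_self[OF x(2)]] .
  have "is_child (\<phi> x) a (\<phi> w)"
    using subtree_iso_is_child[OF iso x(2) subtree_self[OF x(2)] child] .
  then have child': "is_child y a (\<phi> w)"
    using iso by (simp add: subtree_iso_def)
  have "subtree_iso w (\<phi> w) \<phi>" using subtree_iso_restrict[OF iso x(2) w] .
  moreover have "w \<in> V" "\<phi> w \<in> V"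
    using w child' subtree_subset by (auto simp: is_child_def)
  ultimately have "class_index w = class_index (\<phi> w)"
    using class_index_eq_iff end_isomorphic_iff_subtree_iso by blast
  with child' show ?thesis by (simp add: \<phi>_def)
qed

lemma transported_child_inj:
  assumes y: "y \<in> V"
    and e1: "(x1, a1, w1) \<in> representative_child_edges" "class_index x1 = class_index y"
    and e2: "(x2, a2, w2) \<in> representative_child_edges" "class_index x2 = class_index y"
    and eq: "iso_from_representative y w1 = iso_from_representative y w2"
  shows "(x1, a1, w1) = (x2, a2, w2)"
proof -
  define x where "x = representative (class_index y)"
  have x12: "x1 = x" "x2 = x" "x \<in> V" and c: "is_child x a1 w1" "is_child x a2 w2"
    using representative_child_edges_source[OF e1] representative_child_edges_source[OF e2]
    by (auto simp: x_def)
  have "w1 \<in> subtree x" "w2 \<in> subtree x"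
    using c is_child_subtree subtree_self[OF x12(3)] by blast+
  then have "w1 = w2"
    using eq subtree_iso_bij[OF subtree_iso_from_representative[OF y]]
    by (auto simp: bij_betw_def x_def dest: inj_onD)
  then show ?thesis
    using c x12 is_child_unique by blast
qed

lemma transported_child_surj:
  assumes child: "is_child y a w'"
  shows "\<exists>w. (representative (class_index y), a, w) \<in> representative_child_edges \<and>
    iso_from_representative y w = w'"
proof -
  have y: "y \<in> V" using is_child_edge[OF child] by blast
  define x where "x = representative (class_index y)"
  define \<phi> where "\<phi> = iso_from_representative y"
  have iso: "subtree_iso x y \<phi>" and xV: "x \<in> V"
    using subtree_iso_from_representative[OF y] representative_in_class[OF y] by (simp_all add: x_def \<phi>_def)
  define \<psi> where "\<psi> = inv_into (subtree x) \<phi>"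
  have iso': "subtree_iso y x \<psi>" using subtree_iso_inv[OF xV iso] by (simp add: \<psi>_def)
  have w': "w' \<in> subtree y" using is_child_subtree[OF child subtree_self[OF y]] .
  have "is_child x a (\<psi> w')"
    using subtree_iso_is_child[OF iso' y subtree_self[OF y] child] iso' by (simp add: subtree_iso_def)
  moreover have "\<phi> (\<psi> w') = w'"
    using subtree_iso_bij[OF iso] w' by (simp add: \<psi>_def bij_betw_def f_inv_into_f)
  ultimately show ?thesis
    using y by (auto simp: representative_child_edges_def x_def \<phi>_def)
qed

lemma tree_presentation_by_classes:
  "tree_presentation A iv V E r representative_child_edges (\<lambda>(x, a, w). class_index x) (\<lambda>(x, a, w). a)
     (\<lambda>(x, a, w). class_index w) class_index (\<lambda>y (x, a, w). iso_from_representative y w)"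
proof unfold_locales
  fix y e
  assume "y \<in> V" "e \<in> representative_child_edges"
    "(case e of (x, a, w) \<Rightarrow> class_index x) = class_index y"
  then show "is_child y (case e of (x, a, w) \<Rightarrow> a) (case e of (x, a, w) \<Rightarrow> iso_from_representative y w)"
    and "class_index (case e of (x, a, w) \<Rightarrow> iso_from_representative y w) =
      (case e of (x, a, w) \<Rightarrow> class_index w)"
    using transported_child by (auto split: prod.splits)
next
  fix y assume "y \<in> V"
  show "inj_on (\<lambda>(x, a, w). iso_from_representative y w)
      {e \<in> representative_child_edges. (case e of (x, a, w) \<Rightarrow> class_index x) = class_index y}"
  proof (rule inj_onI, clarsimp)
    fix x1 a1 w1 x2 a2 w2
    assume "(x1, a1, w1) \<in> representative_child_edges" "class_index x1 = class_index y"
      "(x2, a2, w2) \<in> representative_child_edges" "class_index x2 = class_index y"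
      "iso_from_representative y w1 = iso_from_representative y w2"
    from transported_child_inj[OF \<open>y \<in> V\<close> this] show "x1 = x2 \<and> a1 = a2 \<and> w1 = w2"
      by simp
  qed
next
  fix y a w' assume child: "is_child y a w'"
  then have cls: "class_index (representative (class_index y)) = class_index y"
    using representative_in_class is_child_edge by blast
  obtain w where "(representative (class_index y), a, w) \<in> representative_child_edges"
    "iso_from_representative y w = w'"
    using transported_child_surj[OF child] by blast
  with cls show "\<exists>e\<in>representative_child_edges.
      (case e of (x, a, w) \<Rightarrow> class_index x) = class_index y \<and>
      (case e of (x, a, w) \<Rightarrow> iso_from_representative y w) = w'"
    by (intro bexI[of _ "(representative (class_index y), a, w)"]) simp_all
qed

theorem regular_rooted_at_root: "regular_rooted A iv V E r"
proof (rule regular_rooted_if_tree_presentation[OF tree_presentation_by_classes])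
  show "finite representative_child_edges" by (rule finite_representative_child_edges)
  show "finite (class_index ` V)" by (rule finite_class_index)
  have "a \<in> A" if "is_child x a w" for x a w
    using is_child_edge[OF that] edge_in_graph by blast
  then show "(\<lambda>(x, a, w). a) ` representative_child_edges \<subseteq> A"
    by (auto simp: representative_child_edges_def)
qed

end

theorem theorem3p3:
  fixes A :: "'a set" and iv :: "'a \<Rightarrow> 'a"
    and V :: "'v set" and E :: "('v \<times> 'a \<times> 'v) set"
  assumes "involutive_alphabet A iv"
    and "A_graph A V E"
    and "involutive_graph iv E"
    and "is_tree iv V E"
  shows "regular_tree A iv V E \<longleftrightarrow> context_free A iv V E"
proof -
  obtain r0 where r0: "rooted_tree iv V E r0"
    using assms(4) by (auto simp: is_tree_def)
  have tree_at: "rooted_involutive_tree A iv V E r" if "r \<in> V" for r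
    using rooted_tree_reroot[OF assms(1,2) r0 that] assms(1,2)
    by (simp add: rooted_involutive_tree_def)
  have connected: "connected_graph V E"
    using rooted_tree_connected[OF r0] .
  show ?thesis
  proof
    assume "regular_tree A iv V E"
    then obtain r where r: "r \<in> V" "regular_rooted A iv V E r"
      by (auto simp: regular_tree_def)
    then have "bounded_degree V E \<and> finite (end_class V E r ` V)"
      using rooted_involutive_tree.context_free_if_regular_rooted[OF tree_at] by blast
    then show "context_free A iv V E"
      using assms connected r(1) by (auto simp: context_free_def end_class_def[abs_def])
  next
    assume "context_free A iv V E"
    then obtain r where r: "r \<in> V" "bounded_degree V E" "finite (end_class V E r ` V)"
      by (auto simp: context_free_def end_class_def[abs_def])
    then interpret context_free_rooted_tree A iv V E r
      using tree_at by (simp add: context_free_rooted_tree_def context_free_rooted_tree_axioms_def)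
    show "regular_tree A iv V E"
      using regular_rooted_at_root r(1) by (auto simp: regular_tree_def)
  qed
qed

end
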